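(* Let $n_1,\dots,n_k$ be nonnegative integers and $N=n_1+\dots+n_k$. Then \[ \mathcal{L}^{(t)}_T\Big(\prod_{i=1}^{k}T^{(t)}_{n_i}(x)\Big) \] equals the number of subsets $S$ (the "marked" vertices) of the vertex set of $C_{n_1}\sqcup\dots\sqcup C_{n_k}$ with $|S|=N/(t+1)$ (the count is $0$ if $N/(t+1)$ is not an integer) such that for every marked vertex $j$ in a cycle $C_{n_i}$, the $t$ vertices $j+1,j+2,\dots,j+t$ (indices mod $n_i$) are not all unmarked.
   Context: Fix an integer $t\ge1$. For $n\ge1$ let $C_n$ be the $n$-cycle with vertices $1,\dots,n$ (indices mod $n$); $C_0$ is empty. If $n\ge t+1$, the $t$-paths in $C_n$ are the $n$ sequences $(i,i+1,\dots,i+t)$ mod $n$, $i=1,\dots,n$; if $n\le t$ there are none. Define $T^{(t)}_n(x)=\sum_F(-1)^{|F|}x^{\,n-(t+1)|F|}$ over all families $F$ of $t$-paths in $C_n$ with pairwise disjoint vertex sets, $T^{(t)}_0=1$. Let $\mathcal{L}^{(t)}_T$ be the linear functional on polynomials with $\mathcal{L}^{(t)}_T(x^{(t+1)j})=\binom{(t+1)j}{j}$ for $j\ge0$ and $\mathcal{L}^{(t)}_T(x^m)=0$ if $t+1\nmid m$. *)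

theory Defs
  imports "HOL-Computational_Algebra.Polynomial"
begin

(* Cycle C_n has vertices 0..n-1 (the paper's 1..n, shifted), indices mod n.
   The t-path starting at i is (i, i+1, ..., i+t) mod n; it exists only if n >= t+1.
   t-paths are identified by their starting vertex. *)
definition tpath_starts :: "nat \<Rightarrow> nat \<Rightarrow> nat set" where
  "tpath_starts t n = (if t + 1 \<le> n then {0..<n} else {})"

definition tpath_verts :: "nat \<Rightarrow> nat \<Rightarrow> nat \<Rightarrow> nat set" where
  "tpath_verts t n i = {(i + j) mod n | j. j \<le> t}"

definition disjoint_families :: "nat \<Rightarrow> nat \<Rightarrow> nat set set" where
  "disjoint_families t n = {F. F \<subseteq> tpath_starts t n \<and>
     (\<forall>i\<in>F. \<forall>j\<in>F. i \<noteq> j \<longrightarrow> tpath_verts t n i \<inter> tpath_verts t n j = {})}"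

definition Tpoly :: "nat \<Rightarrow> nat \<Rightarrow> int poly" where
  "Tpoly t n = (\<Sum>F\<in>disjoint_families t n.
      monom ((-1) ^ card F) (n - (t + 1) * card F))"

definition LT :: "nat \<Rightarrow> int poly \<Rightarrow> int" where
  "LT t p = (\<Sum>m\<le>degree p. coeff p m *
      (if (t + 1) dvd m then int (m choose (m div (t + 1))) else 0))"

definition union_verts :: "nat list \<Rightarrow> (nat \<times> nat) set" where
  "union_verts ns = {(i, v). i < length ns \<and> v < ns ! i}"

definition good_marking :: "nat \<Rightarrow> nat list \<Rightarrow> (nat \<times> nat) set \<Rightarrow> bool" where
  "good_marking t ns S = (\<forall>(i, j)\<in>S. \<exists>l\<in>{1..t}. (i, (j + l) mod (ns ! i)) \<in> S)"

end

theory Submission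
  imports Defs "HOL-Library.FuncSet"
begin

(* Expanding the product, every factor T_{n_i} is a signed sum of monomials indexed by
   disjoint families of t-paths in C_{n_i}; hence the product is a signed sum over tuples
   p = (F_1, ..., F_k) of such families, and with g = |F_1| + ... + |F_k| the functional
   contributes (-1)^g * binom(N - (t+1) g, N/(t+1) - g), or 0 if (t+1) does not divide N.
   That binomial coefficient counts the markings S with |S| = N/(t+1) in which every start
   of a path of p is marked and the t remaining vertices of that path are unmarked, i.e.
   every start is a "lonely" mark of S.  Exchanging the two summations, each marking S
   receives the alternating sum over all tuples of subsets of its lonely marks (these are
   automatically disjoint path families), which is 1 if S has no lonely mark and 0 otherwise.
   Markings without lonely marks are exactly the good markings. *)

lemma cyclic_offset_inj:
  fixes a b j n :: nat
  assumes "a < n" "b < n" "(j + a) mod n = (j + b) mod n"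
  shows "a = b"
proof -
  have "int n dvd int (j + a) - int (j + b)"
    using assms(3) by (metis of_nat_mod mod_eq_dvd_iff)
  then have d: "int n dvd int a - int b" by simp
  show "a = b"
  proof (rule ccontr)
    assume "a \<noteq> b"
    then have "int a - int b \<noteq> 0" by simp
    from dvd_imp_le_int[OF this d] show False using assms by simp
  qed
qed

lemma cyclic_offset_diff:
  fixes a b j j' n :: nat
  assumes "j' < n" "(j + a) mod n = (j' + b) mod n" "b \<le> a"
  shows "(j + (a - b)) mod n = j'"
proof -
  have "int n dvd int (j + a) - int (j' + b)"
    using assms(2) by (metis of_nat_mod mod_eq_dvd_iff)
  also have "int (j + a) - int (j' + b) = int (j + (a - b)) - int j'" using assms(3) by simp
  finally have "int (j + (a - b)) mod int n = int j' mod int n" by (simp only: mod_eq_dvd_iff)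
  then have "(j + (a - b)) mod n = j' mod n" by (metis of_nat_mod of_nat_eq_iff)
  then show ?thesis using assms(1) by simp
qed

lemma tpath_verts_image: "tpath_verts t n j = (\<lambda>l. (j + l) mod n) ` {..t}"
  unfolding tpath_verts_def by auto

lemma finite_tpath_verts [simp]: "finite (tpath_verts t n j)"
  by (simp add: tpath_verts_image)

lemma tpath_verts_subset: "n > 0 \<Longrightarrow> tpath_verts t n j \<subseteq> {..<n}"
  unfolding tpath_verts_def by auto

lemma tpath_verts_start: "j < n \<Longrightarrow> j \<in> tpath_verts t n j"
  unfolding tpath_verts_def by force

lemma card_tpath_verts:
  assumes "t + 1 \<le> n"
  shows "card (tpath_verts t n j) = t + 1"
proof -
  have "inj_on (\<lambda>l. (j + l) mod n) {..t}"
  proof (rule inj_onI)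
    fix a b assume "a \<in> {..t}" "b \<in> {..t}" "(j + a) mod n = (j + b) mod n"
    then show "a = b" using assms by (intro cyclic_offset_inj[of a n b j]) auto
  qed
  then show ?thesis by (simp add: tpath_verts_image card_image)
qed

lemma disjoint_families_subset: "F \<in> disjoint_families t n \<Longrightarrow> F \<subseteq> {..<n}"
  unfolding disjoint_families_def tpath_starts_def by (auto split: if_splits)

lemma disjoint_families_long:
  "F \<in> disjoint_families t n \<Longrightarrow> F \<noteq> {} \<Longrightarrow> t + 1 \<le> n"
  unfolding disjoint_families_def tpath_starts_def by (auto split: if_splits)

lemma finite_disjoint_families: "finite (disjoint_families t n)"
  by (rule finite_subset[of _ "Pow {..<n}"]) (auto dest: disjoint_families_subset)

lemma card_family_cover:
  assumes F: "F \<in> disjoint_families t n"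
  shows "card (\<Union>j\<in>F. tpath_verts t n j) = (t + 1) * card F"
proof (cases "F = {}")
  case False
  then have n: "t + 1 \<le> n" using disjoint_families_long F by blast
  have fin: "finite F" using disjoint_families_subset[OF F] finite_subset by blast
  have "card (\<Union>j\<in>F. tpath_verts t n j) = (\<Sum>j\<in>F. card (tpath_verts t n j))"
    using F by (intro card_UN_disjoint[OF fin]) (auto simp: disjoint_families_def)
  then show ?thesis using card_tpath_verts[OF n] by simp
qed simp

lemma family_size_bound:
  assumes F: "F \<in> disjoint_families t n"
  shows "(t + 1) * card F \<le> n"
proof (cases "F = {}")
  case False
  then have "t + 1 \<le> n" using disjoint_families_long F by blast
  then have "(\<Union>j\<in>F. tpath_verts t n j) \<subseteq> {..<n}" using tpath_verts_subset[of n t] by force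
  then have "card (\<Union>j\<in>F. tpath_verts t n j) \<le> n"
    by (metis card_lessThan card_mono finite_lessThan)
  then show ?thesis using card_family_cover[OF F] by simp
qed simp

lemma family_successor_not_start:
  assumes F: "F \<in> disjoint_families t n" and j: "j \<in> F" and l: "l \<in> {1..t}"
  shows "(j + l) mod n \<notin> F"
proof
  assume j': "(j + l) mod n \<in> F"
  have long: "t + 1 \<le> n" using disjoint_families_long[OF F] j by blast
  have jn: "j < n" using disjoint_families_subset[OF F] j by blast
  have "(j + l) mod n \<noteq> (j + 0) mod n"
    using cyclic_offset_inj[of l n 0 j] l long by auto
  then have ne: "(j + l) mod n \<noteq> j" using jn by simp
  have "(j + l) mod n \<in> tpath_verts t n j" using l unfolding tpath_verts_def by auto
  moreover have "(j + l) mod n \<in> tpath_verts t n ((j + l) mod n)"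
    using long by (intro tpath_verts_start) simp
  ultimately show False using F j j' ne unfolding disjoint_families_def by blast
qed

section \<open>The linear functional\<close>

definition moment :: "nat \<Rightarrow> nat \<Rightarrow> int" where
  "moment t m = (if (t + 1) dvd m then int (m choose (m div (t + 1))) else 0)"

lemma LT_eq_sum_upto: "degree p \<le> D \<Longrightarrow> LT t p = (\<Sum>m\<le>D. coeff p m * moment t m)"
  unfolding LT_def moment_def
  by (rule sum.mono_neutral_left) (auto simp: coeff_eq_0)

lemma LT_add: "LT t (p + q) = LT t p + LT t q"
proof -
  define D where "D = max (degree p) (degree q)"
  have "degree (p + q) \<le> D" unfolding D_def by (rule degree_add_le) auto
  then show ?thesis
    using LT_eq_sum_upto[of "p + q" D t] LT_eq_sum_upto[of p D t] LT_eq_sum_upto[of q D t]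
    by (simp add: D_def distrib_right sum.distrib)
qed

lemma LT_zero: "LT t 0 = 0"
  by (simp add: LT_def)

lemma LT_sum: "LT t (\<Sum>x\<in>A. f x) = (\<Sum>x\<in>A. LT t (f x))"
  by (induct A rule: infinite_finite_induct) (simp_all add: LT_zero LT_add)

lemma LT_monom: "LT t (monom c e) = c * moment t e"
proof (cases "c = 0")
  case False
  then have "LT t (monom c e) = (\<Sum>m\<le>e. coeff (monom c e) m * moment t m)"
    by (intro LT_eq_sum_upto) (simp add: degree_monom_eq)
  also have "\<dots> = (\<Sum>m\<in>{e}. coeff (monom c e) m * moment t m)"
    by (rule sum.mono_neutral_right) (auto simp: coeff_monom)
  finally show ?thesis by simp
qed (simp add: LT_zero)

lemma moment_zero: "\<not> (t + 1) dvd m \<Longrightarrow> moment t m = 0"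
  by (simp add: moment_def)

lemma moment_multiple: "moment t ((t + 1) * m) = int (((t + 1) * m) choose m)"
proof -
  have "(t + 1) * m div (t + 1) = m" by (rule nonzero_mult_div_cancel_left) simp
  then show ?thesis by (simp only: moment_def dvd_triv_left if_True)
qed

section \<open>Tuples of families and markings\<close>

lemma union_verts_Sigma: "union_verts ns = Sigma {..<length ns} (\<lambda>i. {..<ns ! i})"
  unfolding union_verts_def by auto

lemma finite_union_verts: "finite (union_verts ns)"
  by (simp add: union_verts_Sigma)

lemma card_union_verts: "card (union_verts ns) = sum_list ns"
  by (simp add: union_verts_Sigma sum_list_sum_nth atLeast0LessThan)

definition family_tuples :: "nat \<Rightarrow> nat list \<Rightarrow> (nat \<Rightarrow> nat set) set" where
  "family_tuples t ns = PiE {..<length ns} (\<lambda>i. disjoint_families t (ns ! i))"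

definition tuple_size :: "nat list \<Rightarrow> (nat \<Rightarrow> nat set) \<Rightarrow> nat" where
  "tuple_size ns p = (\<Sum>i<length ns. card (p i))"

definition tuple_starts :: "nat list \<Rightarrow> (nat \<Rightarrow> nat set) \<Rightarrow> (nat \<times> nat) set" where
  "tuple_starts ns p = Sigma {..<length ns} p"

definition tuple_cover :: "nat \<Rightarrow> nat list \<Rightarrow> (nat \<Rightarrow> nat set) \<Rightarrow> (nat \<times> nat) set" where
  "tuple_cover t ns p = Sigma {..<length ns} (\<lambda>i. \<Union>j\<in>p i. tpath_verts t (ns ! i) j)"

definition lonely :: "nat \<Rightarrow> nat list \<Rightarrow> nat \<Rightarrow> (nat \<times> nat) set \<Rightarrow> nat set" where
  "lonely t ns i S = {j. (i, j) \<in> S \<and> (\<forall>l\<in>{1..t}. (i, (j + l) mod (ns ! i)) \<notin> S)}"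

lemma finite_family_tuples: "finite (family_tuples t ns)"
  unfolding family_tuples_def by (intro finite_PiE) (auto simp: finite_disjoint_families)

lemma family_tuples_member:
  "p \<in> family_tuples t ns \<Longrightarrow> i < length ns \<Longrightarrow> p i \<in> disjoint_families t (ns ! i)"
  unfolding family_tuples_def by auto

lemma tuple_starts_subset_cover:
  assumes "p \<in> family_tuples t ns"
  shows "tuple_starts ns p \<subseteq> tuple_cover t ns p"
  using disjoint_families_subset[OF family_tuples_member[OF assms]] tpath_verts_start
  unfolding tuple_starts_def tuple_cover_def by blast

lemma tuple_cover_subset_verts:
  assumes "p \<in> family_tuples t ns"
  shows "tuple_cover t ns p \<subseteq> union_verts ns"
proof
  fix x assume "x \<in> tuple_cover t ns p"
  then obtain i j v where x: "x = (i, v)" "i < length ns" "j \<in> p i" "v \<in> tpath_verts t (ns ! i) j"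
    unfolding tuple_cover_def by auto
  then have "ns ! i > 0"
    using disjoint_families_subset[OF family_tuples_member[OF assms]] by fastforce
  then show "x \<in> union_verts ns" using x tpath_verts_subset unfolding union_verts_def by blast
qed

lemma card_tuple_starts:
  assumes "p \<in> family_tuples t ns"
  shows "card (tuple_starts ns p) = tuple_size ns p"
  using disjoint_families_subset[OF family_tuples_member[OF assms]]
  unfolding tuple_starts_def tuple_size_def
  by (subst card_SigmaI) (auto intro: finite_subset)

lemma card_tuple_cover:
  assumes "p \<in> family_tuples t ns"
  shows "card (tuple_cover t ns p) = (t + 1) * tuple_size ns p"
proof -
  have fin: "finite (p i)" if "i < length ns" for i
    using disjoint_families_subset[OF family_tuples_member[OF assms that]] finite_subset by blast
  have "card (tuple_cover t ns p) = (\<Sum>i<length ns. card (\<Union>j\<in>p i. tpath_verts t (ns ! i) j))"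
    unfolding tuple_cover_def using fin by (subst card_SigmaI) auto
  also have "\<dots> = (\<Sum>i<length ns. (t + 1) * card (p i))"
    using family_tuples_member[OF assms] by (intro sum.cong) (simp_all add: card_family_cover)
  finally show ?thesis by (simp add: tuple_size_def sum_distrib_left)
qed

lemma tuple_size_bound:
  assumes "p \<in> family_tuples t ns"
  shows "(t + 1) * tuple_size ns p \<le> sum_list ns"
  using card_mono[OF finite_union_verts tuple_cover_subset_verts[OF assms]]
  by (simp add: card_tuple_cover[OF assms] card_union_verts)

lemma starts_lonely_iff:
  assumes p: "p \<in> family_tuples t ns"
  shows "(\<forall>i<length ns. p i \<subseteq> lonely t ns i S) \<longleftrightarrow>
         tuple_starts ns p \<subseteq> S \<and> S \<inter> (tuple_cover t ns p - tuple_starts ns p) = {}"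
proof
  assume lon: "\<forall>i<length ns. p i \<subseteq> lonely t ns i S"
  then have starts: "tuple_starts ns p \<subseteq> S"
    unfolding tuple_starts_def lonely_def by blast
  have "x \<notin> S" if x: "x \<in> tuple_cover t ns p - tuple_starts ns p" for x
  proof -
    obtain i j l where xi: "x = (i, (j + l) mod ns ! i)" "i < length ns" "j \<in> p i" "l \<le> t"
      using x unfolding tuple_cover_def tpath_verts_def by auto
    have "j < ns ! i"
      using disjoint_families_subset[OF family_tuples_member[OF p xi(2)]] xi(3) by blast
    then have "l \<noteq> 0" using x xi unfolding tuple_starts_def by (cases l) auto
    then have "l \<in> {1..t}" using xi(4) by simp
    then show "x \<notin> S" using lon xi(1-3) unfolding lonely_def by blast
  qed
  with starts show "tuple_starts ns p \<subseteq> S \<and> S \<inter> (tuple_cover t ns p - tuple_starts ns p) = {}"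
    by blast
next
  assume S: "tuple_starts ns p \<subseteq> S \<and> S \<inter> (tuple_cover t ns p - tuple_starts ns p) = {}"
  show "\<forall>i<length ns. p i \<subseteq> lonely t ns i S"
  proof (intro allI impI subsetI)
    fix i j assume i: "i < length ns" and j: "j \<in> p i"
    have "(i, (j + l) mod ns ! i) \<notin> S" if l: "l \<in> {1..t}" for l
    proof -
      have "(i, (j + l) mod ns ! i) \<in> tuple_cover t ns p"
        unfolding tuple_cover_def tpath_verts_def using i j l by auto
      moreover have "(i, (j + l) mod ns ! i) \<notin> tuple_starts ns p"
        using family_successor_not_start[OF family_tuples_member[OF p i] j l]
        unfolding tuple_starts_def by auto
      ultimately show ?thesis using S by blast
    qed
    moreover have "(i, j) \<in> S" using S i j unfolding tuple_starts_def by blast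
    ultimately show "j \<in> lonely t ns i S" unfolding lonely_def by blast
  qed
qed

lemma card_subsets_between:
  assumes "finite V" "A \<subseteq> C" "C \<subseteq> V" "card A \<le> M"
  shows "card {S. S \<subseteq> V \<and> card S = M \<and> A \<subseteq> S \<and> S \<inter> (C - A) = {}}
       = card (V - C) choose (M - card A)"
proof -
  have finA: "finite A" using finite_subset[OF subset_trans[OF assms(2,3)] assms(1)] .
  have "bij_betw (\<lambda>S'. S' \<union> A) {S'. S' \<subseteq> V - C \<and> card S' = M - card A}
          {S. S \<subseteq> V \<and> card S = M \<and> A \<subseteq> S \<and> S \<inter> (C - A) = {}}"
  proof (rule bij_betw_byWitness[where f' = "\<lambda>S. S - A"])
    show "\<forall>S'\<in>{S'. S' \<subseteq> V - C \<and> card S' = M - card A}. S' \<union> A - A = S'"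
      using assms(2) by blast
    show "\<forall>S\<in>{S. S \<subseteq> V \<and> card S = M \<and> A \<subseteq> S \<and> S \<inter> (C - A) = {}}. S - A \<union> A = S"
      by blast
    show "(\<lambda>S'. S' \<union> A) ` {S'. S' \<subseteq> V - C \<and> card S' = M - card A}
        \<subseteq> {S. S \<subseteq> V \<and> card S = M \<and> A \<subseteq> S \<and> S \<inter> (C - A) = {}}"
    proof clarify
      fix S' assume S': "S' \<subseteq> V - C" "card S' = M - card A"
      have "finite S'" using S'(1) assms(1) finite_subset by blast
      moreover have "S' \<inter> A = {}" using S'(1) assms(2) by blast
      ultimately have "card (S' \<union> A) = M" using S'(2) assms(4) finA by (simp add: card_Un_disjoint)
      then show "S' \<union> A \<subseteq> V \<and> card (S' \<union> A) = M \<and> A \<subseteq> S' \<union> A \<and> (S' \<union> A) \<inter> (C - A) = {}"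
        using S'(1) assms(2,3) by blast
    qed
    show "(\<lambda>S. S - A) ` {S. S \<subseteq> V \<and> card S = M \<and> A \<subseteq> S \<and> S \<inter> (C - A) = {}}
        \<subseteq> {S'. S' \<subseteq> V - C \<and> card S' = M - card A}"
    proof clarify
      fix S assume S: "S \<subseteq> V" "A \<subseteq> S" "S \<inter> (C - A) = {}"
      have "card (S - A) = card S - card A" using finA S(2) by (rule card_Diff_subset)
      moreover have "S - A \<subseteq> V - C" using S by blast
      ultimately show "S - A \<subseteq> V - C \<and> card (S - A) = card S - card A" by blast
    qed
  qed
  then have "card {S. S \<subseteq> V \<and> card S = M \<and> A \<subseteq> S \<and> S \<inter> (C - A) = {}}
      = card {S'. S' \<subseteq> V - C \<and> card S' = M - card A}"
    by (simp add: bij_betw_same_card)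
  also have "\<dots> = card (V - C) choose (M - card A)"
    using assms by (intro n_subsets) simp
  finally show ?thesis .
qed

lemma card_markings_with_lonely_starts:
  assumes p: "p \<in> family_tuples t ns" and le: "tuple_size ns p \<le> M"
  shows "card {S. S \<subseteq> union_verts ns \<and> card S = M \<and> (\<forall>i<length ns. p i \<subseteq> lonely t ns i S)}
       = (sum_list ns - (t + 1) * tuple_size ns p) choose (M - tuple_size ns p)"
proof -
  have cover: "tuple_cover t ns p \<subseteq> union_verts ns" by (rule tuple_cover_subset_verts[OF p])
  have "card (union_verts ns - tuple_cover t ns p) = sum_list ns - (t + 1) * tuple_size ns p"
    using cover by (simp add: card_Diff_subset finite_union_verts finite_subset
        card_tuple_cover[OF p] card_union_verts)
  then show ?thesis
    using card_subsets_between[OF finite_union_verts tuple_starts_subset_cover[OF p] cover]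
    by (simp add: starts_lonely_iff[OF p] card_tuple_starts[OF p] le)
qed

(* The lonely marks of a cycle always form a disjoint family: two of them cannot share
   a vertex of their paths, since one would lie among the t successors of the other. *)
lemma lonely_subset_family:
  assumes S: "S \<subseteq> union_verts ns" and X: "X \<subseteq> lonely t ns i S"
  shows "X \<in> disjoint_families t (ns ! i)"
proof (cases "X = {}")
  case True then show ?thesis by (simp add: disjoint_families_def)
next
  case False
  let ?n = "ns ! i"
  have lon: "(i, j) \<in> S" "\<And>l. l \<in> {1..t} \<Longrightarrow> (i, (j + l) mod ?n) \<notin> S" if "j \<in> X" for j
    using X that unfolding lonely_def by auto
  have Xn: "X \<subseteq> {..<?n}" using S X unfolding lonely_def union_verts_def by auto
  obtain j0 where j0: "j0 \<in> X" using False by blast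
  have long: "t + 1 \<le> ?n"
  proof (rule ccontr)
    assume "\<not> t + 1 \<le> ?n"
    moreover have "j0 < ?n" using Xn j0 by blast
    ultimately have "(i, (j0 + ?n) mod ?n) \<notin> S" using lon(2)[OF j0, of ?n] by auto
    then show False using lon(1)[OF j0] \<open>j0 < ?n\<close> by simp
  qed
  have "tpath_verts t ?n j \<inter> tpath_verts t ?n j' = {}"
    if j: "j \<in> X" and j': "j' \<in> X" and ne: "j \<noteq> j'" for j j'
  proof (rule ccontr)
    assume "tpath_verts t ?n j \<inter> tpath_verts t ?n j' \<noteq> {}"
    then obtain a b where ab: "a \<le> t" "b \<le> t" and e: "(j + a) mod ?n = (j' + b) mod ?n"
      unfolding tpath_verts_def by auto
    have jn: "j < ?n" and jn': "j' < ?n" using Xn j j' by auto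
    (* the later of the two starts is a successor of the earlier one, at distance \<le> t *)
    have "\<exists>x\<in>X. \<exists>y\<in>X. \<exists>d\<in>{1..t}. (x + d) mod ?n = y"
    proof (cases "b \<le> a")
      case True
      have m: "(j + (a - b)) mod ?n = j'" by (rule cyclic_offset_diff[OF jn' e True])
      then have "a - b \<noteq> 0" using ne jn by (metis add_0_right mod_less)
      then show ?thesis using m ab j j' by (intro bexI[of _ j] bexI[of _ j'] bexI[of _ "a - b"]) auto
    next
      case False
      have m: "(j' + (b - a)) mod ?n = j" by (rule cyclic_offset_diff[OF jn e[symmetric]]) (use False in auto)
      then have "b - a \<noteq> 0" using ne jn' by (metis add_0_right mod_less)
      then show ?thesis using m ab j j' by (intro bexI[of _ j'] bexI[of _ j] bexI[of _ "b - a"]) auto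
    qed
    then show False using lon by blast
  qed
  then show ?thesis unfolding disjoint_families_def tpath_starts_def using long Xn by auto
qed

lemma good_marking_iff_no_lonely:
  assumes "S \<subseteq> union_verts ns"
  shows "good_marking t ns S \<longleftrightarrow> (\<forall>i<length ns. lonely t ns i S = {})"
  using assms unfolding good_marking_def lonely_def union_verts_def by fastforce

section \<open>Expansion of the product\<close>

lemma prod_list_conv_prod_nth:
  "(\<Prod>n\<leftarrow>ns. (f n :: 'a::comm_monoid_mult)) = (\<Prod>i<length ns. f (ns ! i))"
  by (induct ns) (simp_all add: prod.lessThan_Suc_shift del: prod.lessThan_Suc)

lemma prod_monom: "(\<Prod>i\<in>A. monom (c i) (e i)) = monom (\<Prod>i\<in>A. c i) (\<Sum>i\<in>A. e i)"
  by (induct A rule: infinite_finite_induct) (simp_all add: mult_monom one_poly_eq_simps)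

lemma LT_product_expansion:
  "LT t (\<Prod>n\<leftarrow>ns. Tpoly t n) = (\<Sum>p\<in>family_tuples t ns.
      (-1) ^ tuple_size ns p * moment t (sum_list ns - (t + 1) * tuple_size ns p))"
proof -
  let ?I = "{..<length ns}"
  have exponent: "(\<Sum>i\<in>?I. ns ! i - (t + 1) * card (p i)) = sum_list ns - (t + 1) * tuple_size ns p"
    if p: "p \<in> family_tuples t ns" for p
  proof -
    have "(\<Sum>i\<in>?I. ns ! i - (t + 1) * card (p i)) = (\<Sum>i\<in>?I. ns ! i) - (\<Sum>i\<in>?I. (t + 1) * card (p i))"
      using family_size_bound family_tuples_member[OF p] by (intro sum_subtractf_nat) auto
    then show ?thesis
      by (simp add: tuple_size_def sum_list_sum_nth atLeast0LessThan sum_distrib_left)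
  qed
  have "(\<Prod>n\<leftarrow>ns. Tpoly t n) = (\<Prod>i\<in>?I. \<Sum>F\<in>disjoint_families t (ns ! i).
      monom ((-1) ^ card F) (ns ! i - (t + 1) * card F))"
    by (simp add: prod_list_conv_prod_nth Tpoly_def)
  also have "\<dots> = (\<Sum>p\<in>family_tuples t ns.
      \<Prod>i\<in>?I. monom ((-1) ^ card (p i)) (ns ! i - (t + 1) * card (p i)))"
    unfolding family_tuples_def by (rule prod_sum_PiE) (auto simp: finite_disjoint_families)
  also have "\<dots> = (\<Sum>p\<in>family_tuples t ns.
      monom ((-1) ^ tuple_size ns p) (sum_list ns - (t + 1) * tuple_size ns p))"
  proof (rule sum.cong[OF refl])
    fix p assume p: "p \<in> family_tuples t ns"
    show "(\<Prod>i\<in>?I. monom ((-1) ^ card (p i)) (ns ! i - (t + 1) * card (p i)))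
        = monom ((-1) ^ tuple_size ns p) (sum_list ns - (t + 1) * tuple_size ns p)"
      unfolding prod_monom exponent[OF p] by (simp add: tuple_size_def power_sum)
  qed
  finally show ?thesis by (simp add: LT_sum LT_monom)
qed

section \<open>The sieve\<close>

lemma alternating_sum_Pow:
  assumes "finite A"
  shows "(\<Sum>X\<in>Pow A. (-1::'a::comm_ring_1) ^ card X) = (if A = {} then 1 else 0)"
proof -
  have "(\<Sum>X\<in>Pow A. (-1::'a) ^ card X) = 0 ^ card A"
    using prod_diff_conv_sum[OF assms, of "\<lambda>_. 1" "\<lambda>_. 1", symmetric] by simp
  then show ?thesis by (simp add: power_0_left card_eq_0_iff assms)
qed

lemma alternating_sum_PiE_Pow:
  assumes "finite I" "\<And>i. i \<in> I \<Longrightarrow> finite (B i)"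
  shows "(\<Sum>p\<in>PiE I (\<lambda>i. Pow (B i)). (-1::'a::comm_ring_1) ^ (\<Sum>i\<in>I. card (p i)))
       = (if \<forall>i\<in>I. B i = {} then 1 else 0)"
proof -
  have "(\<Sum>p\<in>PiE I (\<lambda>i. Pow (B i)). (-1::'a) ^ (\<Sum>i\<in>I. card (p i)))
      = (\<Prod>i\<in>I. \<Sum>X\<in>Pow (B i). (-1) ^ card X)"
    using assms by (simp add: prod_sum_PiE power_sum)
  also have "\<dots> = (\<Prod>i\<in>I. if B i = {} then 1 else 0)"
    using assms by (intro prod.cong) (simp_all add: alternating_sum_Pow)
  also have "\<dots> = (if \<forall>i\<in>I. B i = {} then 1 else 0)"
    using assms(1) by (induct I rule: finite_induct) auto
  finally show ?thesis .
qed

lemma sieve_lonely: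
  assumes S: "S \<subseteq> union_verts ns"
  shows "(\<Sum>p\<in>{p \<in> family_tuples t ns. \<forall>i<length ns. p i \<subseteq> lonely t ns i S}.
            (-1::int) ^ tuple_size ns p)
       = (if \<forall>i<length ns. lonely t ns i S = {} then 1 else 0)"
proof -
  have fin: "finite (lonely t ns i S)" for i
    using finite_subset[OF _ finite_union_verts, of "{i} \<times> lonely t ns i S" ns] S
    unfolding lonely_def by (auto dest: finite_cartesian_productD2)
  have "{p \<in> family_tuples t ns. \<forall>i<length ns. p i \<subseteq> lonely t ns i S}
      = PiE {..<length ns} (\<lambda>i. Pow (lonely t ns i S))"
    unfolding family_tuples_def using lonely_subset_family[OF S] by (auto simp: PiE_def Pi_def)
  moreover have "(\<forall>i\<in>{..<length ns}. lonely t ns i S = {}) \<longleftrightarrow> (\<forall>i<length ns. lonely t ns i S = {})"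
    by blast
  ultimately show ?thesis
    using alternating_sum_PiE_Pow[of "{..<length ns}" "\<lambda>i. lonely t ns i S", OF finite_lessThan fin]
    by (simp only: tuple_size_def)
qed

lemma moment_tuple_vanishes:
  assumes N: "\<not> (t + 1) dvd sum_list ns" and p: "p \<in> family_tuples t ns"
  shows "moment t (sum_list ns - (t + 1) * tuple_size ns p) = 0"
proof (rule moment_zero, rule notI)
  assume "(t + 1) dvd sum_list ns - (t + 1) * tuple_size ns p"
  then have "(t + 1) dvd sum_list ns - (t + 1) * tuple_size ns p + (t + 1) * tuple_size ns p"
    using dvd_add dvd_triv_left by blast
  then show False using N tuple_size_bound[OF p] by simp
qed

lemma moment_counts_markings:
  assumes p: "p \<in> family_tuples t ns" and N: "sum_list ns = (t + 1) * M"
  shows "moment t (sum_list ns - (t + 1) * tuple_size ns p)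
       = int (card {S. S \<subseteq> union_verts ns \<and> card S = M \<and> (\<forall>i<length ns. p i \<subseteq> lonely t ns i S)})"
proof -
  have "(t + 1) * tuple_size ns p \<le> (t + 1) * M" using tuple_size_bound[OF p] N by simp
  then have le: "tuple_size ns p \<le> M" by (subst (asm) mult_le_cancel1) simp
  have e: "sum_list ns - (t + 1) * tuple_size ns p = (t + 1) * (M - tuple_size ns p)"
    using N by (simp add: diff_mult_distrib2)
  show ?thesis
    unfolding card_markings_with_lonely_starts[OF p le] e moment_multiple ..
qed

lemma signed_count_markings:
  fixes t M :: nat and ns :: "nat list"
  defines "SS \<equiv> {S. S \<subseteq> union_verts ns \<and> card S = M}"
  shows "(\<Sum>p\<in>family_tuples t ns. (-1) ^ tuple_size ns p *
            int (card {S\<in>SS. \<forall>i<length ns. p i \<subseteq> lonely t ns i S}))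
       = int (card {S\<in>SS. good_marking t ns S})"
proof -
  have finSS: "finite SS" unfolding SS_def using finite_union_verts by simp
  have "(\<Sum>p\<in>family_tuples t ns. (-1) ^ tuple_size ns p *
            int (card {S\<in>SS. \<forall>i<length ns. p i \<subseteq> lonely t ns i S}))
      = (\<Sum>p\<in>family_tuples t ns. \<Sum>S\<in>{S\<in>SS. \<forall>i<length ns. p i \<subseteq> lonely t ns i S}.
            (-1) ^ tuple_size ns p)"
    by (simp add: mult.commute)
  also have "\<dots> = (\<Sum>S\<in>SS. \<Sum>p\<in>{p \<in> family_tuples t ns. \<forall>i<length ns. p i \<subseteq> lonely t ns i S}.
            (-1) ^ tuple_size ns p)"
    by (rule sum.swap_restrict[OF finite_family_tuples finSS])
  also have "\<dots> = (\<Sum>S\<in>SS. if good_marking t ns S then 1 else 0)"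
    by (intro sum.cong refl) (simp add: SS_def sieve_lonely good_marking_iff_no_lonely)
  also have "\<dots> = int (card {S\<in>SS. good_marking t ns S})"
    using finSS by (simp add: sum.inter_filter[symmetric])
  finally show ?thesis .
qed

theorem mainTheorem7:
  fixes t :: nat and ns :: "nat list"
  assumes "t \<ge> 1"
  shows "LT t (\<Prod>n\<leftarrow>ns. Tpoly t n) =
    (if (t + 1) dvd sum_list ns then
       int (card {S. S \<subseteq> union_verts ns \<and> card S = sum_list ns div (t + 1)
                    \<and> good_marking t ns S})
     else 0)"
proof (cases "(t + 1) dvd sum_list ns")
  case False
  have "LT t (\<Prod>n\<leftarrow>ns. Tpoly t n) = 0"
    unfolding LT_product_expansion
    by (intro sum.neutral ballI) (simp only: moment_tuple_vanishes[OF False] mult_zero_right)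
  with False show ?thesis by simp
next
  case True
  then obtain M where N: "sum_list ns = (t + 1) * M" by blast
  have "LT t (\<Prod>n\<leftarrow>ns. Tpoly t n) = (\<Sum>p\<in>family_tuples t ns. (-1) ^ tuple_size ns p *
      int (card {S\<in>{S. S \<subseteq> union_verts ns \<and> card S = M}. \<forall>i<length ns. p i \<subseteq> lonely t ns i S}))"
    unfolding LT_product_expansion
    by (intro sum.cong refl) (simp only: moment_counts_markings[OF _ N] mem_Collect_eq conj_assoc)
  also have "\<dots> = int (card {S\<in>{S. S \<subseteq> union_verts ns \<and> card S = M}. good_marking t ns S})"
    by (rule signed_count_markings)
  finally have "LT t (\<Prod>n\<leftarrow>ns. Tpoly t n) =
      int (card {S\<in>{S. S \<subseteq> union_verts ns \<and> card S = M}. good_marking t ns S})" .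
  moreover have "sum_list ns div (t + 1) = M" unfolding N by (rule nonzero_mult_div_cancel_left) simp
  ultimately show ?thesis using True by (simp add: conj_assoc)
qed

end
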